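(* Let $G$ be a complete edge-colored graph, $\ell$ a labeling of $G$, and $u,v,w$ three distinct vertices of $G$ with $\ell(u)<\ell(v)<\ell(w)$. Suppose the edges $\{u,v\}$ and $\{v,w\}$ have the same color and this color differs from the color of $\{u,w\}$. Then there are no permutations $\pi_1,\dots,\pi_k$ such that $(G,\ell)$ is a complete edge-colored permutation graph of $\pi_1,\dots,\pi_k$.
   Context: A complete $k$-edge-colored graph $G=(V,E_1,\dots,E_k)$ is the complete graph on a finite set $V$ whose edges are partitioned into $k$ nonempty color classes $E_i$; $G_{|i}=(V,E_i)$. A labeling is a bijection $\ell:V\to\{1,\dots,|V|\}$. For a permutation $\pi$ of $\{1,\dots,|V|\}$, a graph $(V,E)$ with labeling $\ell$ is a simple permutation graph of $\pi$ if for all $u,v$ with $\ell(u)>\ell(v)$: $\{u,v\}\in E$ iff $\pi^{-1}(\ell(u))<\pi^{-1}(\ell(v))$. $(G,\ell)$ is a complete edge-colored permutation graph of $\pi_1,\dots,\pi_k$ if $(G_{|i},\ell)$ is a simple permutation graph of $\pi_i$ for each $i$. *)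

theory Defs
  imports "HOL-Combinatorics.Permutations"
begin

definition all_edges :: "'a set \<Rightarrow> 'a set set" where
  "all_edges V = {e. \<exists>u\<in>V. \<exists>v\<in>V. u \<noteq> v \<and> e = {u, v}}"

definition complete_edge_colored :: "'a set \<Rightarrow> nat \<Rightarrow> (nat \<Rightarrow> 'a set set) \<Rightarrow> bool" where
  "complete_edge_colored V k E \<longleftrightarrow>
     finite V \<and>
     (\<forall>i\<in>{1..k}. E i \<subseteq> all_edges V \<and> E i \<noteq> {}) \<and>
     (\<forall>i\<in>{1..k}. \<forall>j\<in>{1..k}. i \<noteq> j \<longrightarrow> E i \<inter> E j = {}) \<and>
     (\<Union>i\<in>{1..k}. E i) = all_edges V"

definition labeling :: "'a set \<Rightarrow> ('a \<Rightarrow> nat) \<Rightarrow> bool" where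
  "labeling V l \<longleftrightarrow> bij_betw l V {1..card V}"

definition simple_perm_graph :: "'a set \<Rightarrow> 'a set set \<Rightarrow> ('a \<Rightarrow> nat) \<Rightarrow> (nat \<Rightarrow> nat) \<Rightarrow> bool" where
  "simple_perm_graph V E l p \<longleftrightarrow>
     (\<forall>u\<in>V. \<forall>v\<in>V. l u > l v \<longrightarrow> ({u, v} \<in> E \<longleftrightarrow> inv p (l u) < inv p (l v)))"

definition complete_edge_colored_perm_graph ::
  "'a set \<Rightarrow> nat \<Rightarrow> (nat \<Rightarrow> 'a set set) \<Rightarrow> ('a \<Rightarrow> nat) \<Rightarrow> (nat \<Rightarrow> nat \<Rightarrow> nat) \<Rightarrow> bool" where
  "complete_edge_colored_perm_graph V k E l p \<longleftrightarrow>
     (\<forall>i\<in>{1..k}. p i permutes {1..card V} \<and> simple_perm_graph V (E i) l (p i))"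

end

theory Submission
  imports Defs
begin

text \<open>In a simple permutation graph, an edge between vertices with labels a < b is an
  inversion of the permutation: b precedes a in it. Inversions compose along increasing
  label chains, so the colour class containing {u, v} and {v, w} must also contain {u, w}.\<close>

lemma simple_perm_graph_edge_iff:
  assumes "simple_perm_graph V E l p" and "u \<in> V" "v \<in> V" and "l u < l v"
  shows "{u, v} \<in> E \<longleftrightarrow> inv p (l v) < inv p (l u)"
  using assms unfolding simple_perm_graph_def by (metis insert_commute)

lemma simple_perm_graph_edge_trans:
  assumes G: "simple_perm_graph V E l p"
    and "u \<in> V" "v \<in> V" "w \<in> V" and "l u < l v" "l v < l w"
    and "{u, v} \<in> E" "{v, w} \<in> E"
  shows "{u, w} \<in> E"
proof -
  have "inv p (l v) < inv p (l u)"
    using simple_perm_graph_edge_iff [OF G \<open>u \<in> V\<close> \<open>v \<in> V\<close> \<open>l u < l v\<close>] \<open>{u, v} \<in> E\<close> by blast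
  moreover have "inv p (l w) < inv p (l v)"
    using simple_perm_graph_edge_iff [OF G \<open>v \<in> V\<close> \<open>w \<in> V\<close> \<open>l v < l w\<close>] \<open>{v, w} \<in> E\<close> by blast
  ultimately have "inv p (l w) < inv p (l u)"
    by (rule less_trans [rotated])
  moreover have "l u < l w"
    using \<open>l u < l v\<close> \<open>l v < l w\<close> by (rule less_trans)
  ultimately show ?thesis
    using simple_perm_graph_edge_iff [OF G \<open>u \<in> V\<close> \<open>w \<in> V\<close>] by blast
qed

theorem lemma3p9:
  fixes V :: "'a set" and k :: nat and E :: "nat \<Rightarrow> 'a set set" and l :: "'a \<Rightarrow> nat"
    and u v w :: 'a
  assumes "complete_edge_colored V k E"
    and "labeling V l"
    and "u \<in> V" "v \<in> V" "w \<in> V" "u \<noteq> v" "v \<noteq> w" "u \<noteq> w"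
    and "l u < l v" "l v < l w"
    and "\<exists>i\<in>{1..k}. {u, v} \<in> E i \<and> {v, w} \<in> E i \<and> {u, w} \<notin> E i"
  shows "\<not> (\<exists>p. complete_edge_colored_perm_graph V k E l p)"
proof
  assume "\<exists>p. complete_edge_colored_perm_graph V k E l p"
  then obtain p where p: "complete_edge_colored_perm_graph V k E l p" ..
  obtain i where i: "i \<in> {1..k}" "{u, v} \<in> E i" "{v, w} \<in> E i" "{u, w} \<notin> E i"
    using assms(11) by blast
  have "simple_perm_graph V (E i) l (p i)"
    using p i(1) unfolding complete_edge_colored_perm_graph_def by blast
  then have "{u, w} \<in> E i"
    by (rule simple_perm_graph_edge_trans) (use assms(3-5,9,10) i(2,3) in auto)
  with i(4) show False by contradiction
qed

end
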